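(* Let $n\ge 2$ and $x\in\mathbb{R}^{n+1}$ with $|x|<1$, and let $f: S^n \to (0,\infty)$ be $f(y) = |y-x|$. Then, as symmetric 2-tensors on $S^n$, $$\frac{\nabla_{S^n}^2 f}{f} \geq -\frac{1}{4}\, g .$$ Equivalently, for every $y\in S^n$ and every unit vector $\theta\in\mathbb{R}^{n+1}$ with $\langle y,\theta\rangle = 0$, $$\frac{1}{|y-x|^2}\left(\langle x,y\rangle - \frac{\langle x,\theta\rangle^2}{|y-x|^2}\right) \geq -\frac14 .$$
   Context: $S^n\subset\mathbb{R}^{n+1}$ is the unit sphere with its canonical Riemannian metric $g$, and $\nabla_{S^n}^2$ denotes the Riemannian Hessian (with respect to the Levi-Civita connection of $g$) of a function on $S^n$. $\langle\cdot,\cdot\rangle$ and $|\cdot|$ are the Euclidean inner product and norm on $\mathbb{R}^{n+1}$. *)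

theory Defs
  imports "HOL-Analysis.Analysis"
begin

text \<open>Unit sphere S^n in R^(n+1), with R^(n+1) modelled as real^'n, CARD('n) = n+1.\<close>

definition on_sphere :: "'a::real_normed_vector \<Rightarrow> bool" where
  "on_sphere y \<longleftrightarrow> norm y = 1"

definition sphere_geodesic :: "'a::real_inner \<Rightarrow> 'a \<Rightarrow> real \<Rightarrow> 'a" where
  "sphere_geodesic y v t = cos (t * norm v) *\<^sub>R y + sin (t * norm v) *\<^sub>R (v /\<^sub>R norm v)"

text \<open>Riemannian Hessian quadratic form of f at y in direction v (tangent):
  Hess f (v,v) = (f o exp_y(t v))''(0). Only values of f on the sphere are used.\<close>

definition sphere_hessian :: "('a::real_inner \<Rightarrow> real) \<Rightarrow> 'a \<Rightarrow> 'a \<Rightarrow> real" where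
  "sphere_hessian f y v = deriv (deriv (\<lambda>t. f (sphere_geodesic y v t))) 0"

end

theory Submission
  imports Defs
begin

text \<open>Along the great circle through \<open>y\<close> in direction \<open>\<theta>\<close>, the squared distance to \<open>x\<close> is
  \<open>D(t) = 1 + |x|\<^sup>2 - 2(a cos t + b sin t)\<close> with \<open>a = \<langle>x,y\<rangle>\<close>, \<open>b = \<langle>x,\<theta>\<rangle>\<close>, and
  \<open>a\<^sup>2 + b\<^sup>2 \<le> |x|\<^sup>2\<close> by Bessel's inequality. Differentiating \<open>\<surd>D\<close> twice gives
  \<open>\<nabla>\<^sup>2f(\<theta>,\<theta>)/f = (a - b\<^sup>2/D)/D\<close> with \<open>D = D(0)\<close>, and this is at least \<open>-1/4\<close> because
  \<open>4(aD - b\<^sup>2) + D\<^sup>2 \<ge> 4aD - 4(|x|\<^sup>2 - a\<^sup>2) + D\<^sup>2 = (1 - |x|\<^sup>2)\<^sup>2\<close>.\<close>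

lemma cauchy_schwarz_2:
  fixes c s a b :: real
  shows "(c * a + s * b)\<^sup>2 \<le> (c\<^sup>2 + s\<^sup>2) * (a\<^sup>2 + b\<^sup>2)"
proof -
  have "(c\<^sup>2 + s\<^sup>2) * (a\<^sup>2 + b\<^sup>2) - (c * a + s * b)\<^sup>2 = (c * b - s * a)\<^sup>2"
    by (simp add: power2_eq_square algebra_simps)
  thus ?thesis by (smt (verit) zero_le_power2)
qed

lemma trig_combination_le:
  fixes a b t :: real
  shows "a * cos t + b * sin t \<le> sqrt (a\<^sup>2 + b\<^sup>2)"
proof -
  have "(cos t * a + sin t * b)\<^sup>2 \<le> a\<^sup>2 + b\<^sup>2"
    using cauchy_schwarz_2[of "cos t" a "sin t" b] by simp
  hence "\<bar>a * cos t + b * sin t\<bar> \<le> sqrt (a\<^sup>2 + b\<^sup>2)"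
    by (simp add: real_le_rsqrt mult.commute)
  thus ?thesis by simp
qed

lemma orthonormal_pair_bessel:
  fixes x y u :: "'a::real_inner"
  assumes "norm y = 1" "norm u = 1" "y \<bullet> u = 0"
  shows "(x \<bullet> y)\<^sup>2 + (x \<bullet> u)\<^sup>2 \<le> (norm x)\<^sup>2"
proof -
  have yy: "y \<bullet> y = 1" and uu: "u \<bullet> u = 1"
    using assms(1,2) by (simp_all add: power2_norm_eq_inner[symmetric])
  have "0 \<le> (norm (x - (x \<bullet> y) *\<^sub>R y - (x \<bullet> u) *\<^sub>R u))\<^sup>2" by simp
  also have "\<dots> = (norm x)\<^sup>2 - (x \<bullet> y)\<^sup>2 - (x \<bullet> u)\<^sup>2"
    using assms(3) unfolding power2_norm_eq_inner
    by (simp add: inner_diff_left inner_diff_right yy uu inner_commute algebra_simps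
        power2_eq_square)
  finally show ?thesis by simp
qed

lemma hessian_quotient_lower_bound:
  fixes a b r D :: real
  assumes "a\<^sup>2 + b\<^sup>2 \<le> r\<^sup>2" "D = 1 + r\<^sup>2 - 2 * a" "D > 0"
  shows "(a - b\<^sup>2 / D) / D \<ge> -1/4"
proof -
  have "4 * a * D - 4 * b\<^sup>2 + D\<^sup>2 \<ge> 4 * a * D - 4 * (r\<^sup>2 - a\<^sup>2) + D\<^sup>2"
    using assms(1) by simp
  also have "4 * a * D - 4 * (r\<^sup>2 - a\<^sup>2) + D\<^sup>2 = (1 - r\<^sup>2)\<^sup>2"
    unfolding assms(2) by (simp add: power2_eq_square algebra_simps)
  finally have "4 * a * D - 4 * b\<^sup>2 + D\<^sup>2 \<ge> 0"
    by (smt (verit) zero_le_power2)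
  moreover have "(a - b\<^sup>2 / D) / D = (a * D - b\<^sup>2) / D\<^sup>2"
    using assms(3) by (simp add: field_simps power2_eq_square)
  ultimately show ?thesis using assms(3) by (simp add: field_simps power2_eq_square)
qed

lemma second_deriv_sqrt_trig_at_0:
  fixes a b c w :: real
  assumes "2 * sqrt (a\<^sup>2 + b\<^sup>2) < c"
  shows "deriv (deriv (\<lambda>t. sqrt (c - 2 * (a * cos (t * w) + b * sin (t * w))))) 0
           = w\<^sup>2 * (a - b\<^sup>2 / (c - 2 * a)) / sqrt (c - 2 * a)"
proof -
  define q where "q t = c - 2 * (a * cos (t * w) + b * sin (t * w))" for t
  define N where "N t = w * (a * sin (t * w) - b * cos (t * w))" for t
  define N' where "N' t = w\<^sup>2 * (a * cos (t * w) + b * sin (t * w))" for t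
  have q_pos: "q t > 0" for t
    unfolding q_def using assms trig_combination_le[of a "t * w" b] by argo
  have d_sqrt_q: "((\<lambda>t. sqrt (q t)) has_field_derivative N t / sqrt (q t)) (at t)" for t
  proof -
    have "(q has_field_derivative 2 * N t) (at t)"
      unfolding q_def N_def by (auto intro!: derivative_eq_intros simp: algebra_simps)
    from DERIV_real_sqrt[OF q_pos[of t]] this
    have "((\<lambda>t. sqrt (q t)) has_field_derivative inverse (sqrt (q t)) / 2 * (2 * N t)) (at t)"
      by (rule DERIV_chain2)
    thus ?thesis by (simp add: field_simps)
  qed
  hence first: "deriv (\<lambda>t. sqrt (q t)) = (\<lambda>t. N t / sqrt (q t))"
    using DERIV_imp_deriv by blast
  have "(N has_field_derivative N' t) (at t)" for t
    unfolding N_def N'_def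
    by (auto intro!: derivative_eq_intros simp: algebra_simps power2_eq_square)
  hence "((\<lambda>t. N t / sqrt (q t)) has_field_derivative
           (N' 0 * sqrt (q 0) - N 0 * (N 0 / sqrt (q 0))) / (sqrt (q 0) * sqrt (q 0))) (at 0)"
    using q_pos[of 0] by (intro DERIV_divide d_sqrt_q) simp_all
  hence "deriv (deriv (\<lambda>t. sqrt (q t))) 0
           = (N' 0 * sqrt (q 0) - N 0 * (N 0 / sqrt (q 0))) / (sqrt (q 0) * sqrt (q 0))"
    unfolding first by (rule DERIV_imp_deriv)
  also have "\<dots> = w\<^sup>2 * (a - b\<^sup>2 / q 0) / sqrt (q 0)"
    using q_pos[of 0] unfolding N_def N'_def
    by (simp add: field_simps power2_eq_square)
  finally show ?thesis unfolding q_def by simp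
qed

lemma norm_sphere_geodesic_minus:
  fixes x y v :: "'a::real_inner"
  assumes "norm y = 1" "y \<bullet> v = 0" "v \<noteq> 0"
  shows "norm (sphere_geodesic y v t - x) =
    sqrt (1 + (norm x)\<^sup>2 - 2 * ((x \<bullet> y) * cos (t * norm v) + (x \<bullet> (v /\<^sub>R norm v)) * sin (t * norm v)))"
proof -
  define u where "u = v /\<^sub>R norm v"
  have yy: "y \<bullet> y = 1" using assms(1) by (simp add: power2_norm_eq_inner[symmetric])
  have uu: "u \<bullet> u = 1" using assms(3) unfolding u_def
    by (simp add: power2_norm_eq_inner[symmetric] power2_eq_square)
  have yu: "y \<bullet> u = 0" "u \<bullet> y = 0" using assms(2) unfolding u_def by (simp_all add: inner_commute)
  have "(norm (sphere_geodesic y v t - x))\<^sup>2 =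
      1 + (norm x)\<^sup>2 - 2 * ((x \<bullet> y) * cos (t * norm v) + (x \<bullet> u) * sin (t * norm v))"
    unfolding power2_norm_eq_inner sphere_geodesic_def u_def[symmetric]
    by (simp add: inner_diff_left inner_diff_right inner_add_left inner_add_right yy uu yu
        inner_commute algebra_simps power2_eq_square flip: distrib_left)
  thus ?thesis unfolding u_def by (metis real_sqrt_unique norm_ge_zero)
qed

lemma sphere_hessian_norm_minus_quotient_ge:
  fixes x y v :: "'a::real_inner"
  assumes "norm y = 1" "y \<bullet> v = 0" "norm x < 1"
  shows "sphere_hessian (\<lambda>z. norm (z - x)) y v / norm (y - x) \<ge> - (1/4) * (v \<bullet> v)"
proof (cases "v = 0")
  case True
  hence "sphere_geodesic y v = (\<lambda>t. y)" by (simp add: sphere_geodesic_def fun_eq_iff)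
  thus ?thesis using True by (simp add: sphere_hessian_def)
next
  case False
  define u where "u = v /\<^sub>R norm v"
  define a where "a = x \<bullet> y"
  define b where "b = x \<bullet> u"
  define D where "D = 1 + (norm x)\<^sup>2 - 2 * a"
  have unit_u: "norm u = 1" "y \<bullet> u = 0"
    using False assms(2) by (simp_all add: u_def)
  have bessel: "a\<^sup>2 + b\<^sup>2 \<le> (norm x)\<^sup>2"
    unfolding a_def b_def by (rule orthonormal_pair_bessel[OF assms(1) unit_u])
  have "2 * sqrt (a\<^sup>2 + b\<^sup>2) < 1 + (norm x)\<^sup>2"
  proof -
    have "sqrt (a\<^sup>2 + b\<^sup>2) \<le> norm x" using bessel real_le_lsqrt by simp
    moreover have "0 < (1 - norm x)\<^sup>2" using assms(3) by simp
    ultimately show ?thesis by (simp add: power2_eq_square algebra_simps)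
  qed
  hence hessian: "sphere_hessian (\<lambda>z. norm (z - x)) y v = (norm v)\<^sup>2 * (a - b\<^sup>2 / D) / sqrt D"
    using second_deriv_sqrt_trig_at_0[of a b "1 + (norm x)\<^sup>2" "norm v"]
    unfolding sphere_hessian_def norm_sphere_geodesic_minus[OF assms(1,2) False]
    by (simp add: a_def b_def D_def u_def)
  have "a \<le> sqrt (a\<^sup>2 + b\<^sup>2)" using trig_combination_le[of a 0 b] by simp
  hence D_pos: "D > 0"
    using \<open>2 * sqrt (a\<^sup>2 + b\<^sup>2) < _\<close> unfolding D_def by linarith
  have "norm (y - x) = sqrt D"
    using norm_sphere_geodesic_minus[OF assms(1,2) False, where x = x and t = 0]
    by (simp add: sphere_geodesic_def a_def D_def)
  hence "sphere_hessian (\<lambda>z. norm (z - x)) y v / norm (y - x) = (norm v)\<^sup>2 * ((a - b\<^sup>2 / D) / D)"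
    using D_pos by (simp add: hessian field_simps)
  also have "\<dots> \<ge> (norm v)\<^sup>2 * (-1/4)"
    using hessian_quotient_lower_bound[OF bessel D_def D_pos] by (intro mult_left_mono) auto
  finally show ?thesis by (simp add: power2_norm_eq_inner)
qed

theorem mainTheorem2:
  fixes x :: "real ^ 'n"
  assumes "CARD('n) \<ge> 3"
    and "norm x < 1"
  shows "\<forall>y v. on_sphere y \<and> y \<bullet> v = 0 \<longrightarrow>
           sphere_hessian (\<lambda>z. norm (z - x)) y v / norm (y - x) \<ge> - (1/4) * (v \<bullet> v)"
  \<comment> \<open>The bound holds in every dimension.\<close>
  using sphere_hessian_norm_minus_quotient_ge[OF _ _ assms(2)] by (simp add: on_sphere_def)

end
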